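(* Let $M\in\mathbb{R}^{m\times m}$ be symmetric positive definite, let $\delta_1,\dots,\delta_{s+1}>0$, $\Delta=\mathrm{diag}(\delta_1,\dots,\delta_s)$ and $\Delta_{\mathrm{new}}=\mathrm{diag}(\delta_1,\dots,\delta_{s+1})$, and let $U\in\mathbb{R}^{m\times s}$. Suppose $U\Delta=V\Sigma W^*$ is the exact core SVD of $U\Delta:\mathbb{R}^s_\Delta\to\mathbb{R}^m_M$, where $V\in\mathbb{R}^{m\times k}$ with $V^TMV=I$, $W\in\mathbb{R}^{s\times k}$ with $W^T\Delta W=I$, $W^*=W^T\Delta$, and $\Sigma\in\mathbb{R}^{k\times k}$. Let $c\in\mathbb{R}^m$ and define $$h=c-VV^*c,\quad p=\|h\|_M,\quad Q=\begin{bmatrix}\Sigma&\delta_{s+1}^{1/2}V^*c\\0&\delta_{s+1}^{1/2}p\end{bmatrix}\in\mathbb{R}^{(k+1)\times(k+1)},$$ where $V^*=V^TM$. If $p>0$ and the standard core SVD of $Q$ is $Q=V_Q\Sigma_QW_Q^T$, then the core SVD of $[\,U\ c\,]\Delta_{\mathrm{new}}:\mathbb{R}^{s+1}_{\Delta_{\mathrm{new}}}\to\mathbb{R}^m_M$ is given by $$[\,U\ c\,]\Delta_{\mathrm{new}}=V_{\mathrm{new}}\Sigma_QW_{\mathrm{new}}^*,$$ where $V_{\mathrm{new}}=[\,V\ j\,]V_Q$ with $j=h/p$, $W_{\mathrm{new}}=W_uW_Q$ with $W_u=\begin{bmatrix}W&0\\0&\delta_{s+1}^{-1/2}\end{bmatrix}$,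 and $W_{\mathrm{new}}^*=W_{\mathrm{new}}^T\Delta_{\mathrm{new}}$.
   Context: For symmetric positive definite $M$, $\mathbb{R}^m_M$ is $\mathbb{R}^m$ with inner product $(x,y)_M=y^TMx$ and norm $\|x\|_M=(x^TMx)^{1/2}$; similarly for $\mathbb{R}^s_\Delta$. For a matrix $A:\mathbb{R}^s_\Delta\to\mathbb{R}^m_M$ the Hilbert adjoint is $A^*=\Delta^{-1}A^TM$. If $A$ has exactly $k$ positive singular values $\sigma_1\ge\cdots\ge\sigma_k>0$, a core SVD of $A$ is a factorization $A=V\Sigma W^*$ with $\Sigma=\mathrm{diag}(\sigma_1,\dots,\sigma_k)$, $V\in\mathbb{R}^{m\times k}$ whose columns are $M$-orthonormal eigenvectors of $AA^*$, $W\in\mathbb{R}^{s\times k}$ whose columns are $\Delta$-orthonormal eigenvectors of $A^*A$, satisfying $AW=V\Sigma$, $A^*V=W\Sigma$, and $W^*=W^T\Delta$. The standard core SVD is the case where both inner products are the standard unweighted ones. *)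

theory Defs
  imports "Jordan_Normal_Form.Gauss_Jordan_Elimination"
begin

definition spd_mat :: "nat \<Rightarrow> real mat \<Rightarrow> bool" where
  "spd_mat n M \<longleftrightarrow> M \<in> carrier_mat n n \<and> transpose_mat M = M \<and>
     (\<forall>x \<in> carrier_vec n. x \<noteq> 0\<^sub>v n \<longrightarrow> x \<bullet> (M *\<^sub>v x) > 0)"

definition wnorm :: "real mat \<Rightarrow> real vec \<Rightarrow> real" where
  "wnorm M x = sqrt (x \<bullet> (M *\<^sub>v x))"

text \<open>Hilbert adjoint of A : R^s_D -> R^m_M, namely D^{-1} A^T M.\<close>
definition hadj :: "real mat \<Rightarrow> real mat \<Rightarrow> real mat \<Rightarrow> real mat" where
  "hadj D M A = the (mat_inverse D) * transpose_mat A * M"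

definition core_svd :: "real mat \<Rightarrow> real mat \<Rightarrow> real mat \<Rightarrow> real mat \<Rightarrow> real mat \<Rightarrow> real mat \<Rightarrow> nat \<Rightarrow> bool" where
  "core_svd M D A V S W k \<longleftrightarrow>
     (let m = dim_row A; s = dim_col A in
       M \<in> carrier_mat m m \<and> D \<in> carrier_mat s s \<and>
       V \<in> carrier_mat m k \<and> W \<in> carrier_mat s k \<and> S \<in> carrier_mat k k \<and>
       (\<exists>\<sigma>. S = mat_diag k \<sigma> \<and> (\<forall>i<k. \<sigma> i > 0) \<and> (\<forall>i j. i \<le> j \<longrightarrow> j < k \<longrightarrow> \<sigma> j \<le> \<sigma> i)) \<and>
       transpose_mat V * M * V = 1\<^sub>m k \<and>
       transpose_mat W * D * W = 1\<^sub>m k \<and>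
       A * hadj D M A * V = V * (S * S) \<and>
       hadj D M A * A * W = W * (S * S) \<and>
       A * W = V * S \<and>
       hadj D M A * V = W * S \<and>
       A = V * S * (transpose_mat W * D))"

end

theory Submission
  imports Defs
begin

text \<open>
Let j be the normalised M-orthogonal residual of c against the columns of V, so that
c = V (V^* c) + p j and hence [U c] = [V j] Q W_u^T, where [V j] has M-orthonormal and
W_u has Delta_new-orthonormal columns. Inserting the standard SVD Q = V_Q Sigma_Q W_Q^T
turns this into a factorisation [U c] Delta_new = V_new Sigma_Q W_new^T Delta_new with
M-orthonormal V_new and Delta_new-orthonormal W_new. Any such factorisation with a positive,
decreasing diagonal middle factor is a core SVD: the adjoint is W_new Sigma_Q V_new^T M, and
the eigenvector equations follow by cancelling the orthonormality relations.
\<close>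

lemma assoc_mult_mat_dims:
  fixes A :: "'a :: semiring_0 mat"
  assumes "dim_col A = dim_row B" "dim_col B = dim_row C"
  shows "A * B * C = A * (B * C)"
  using assms by (intro assoc_mult_mat[of A _ "dim_col A" B "dim_col B" C "dim_col C"]) auto

lemma mat_inverse_exists:
  fixes A :: "'a :: field mat"
  assumes A: "A \<in> carrier_mat n n" and "B \<in> carrier_mat n n" "A * B = 1\<^sub>m n" "B * A = 1\<^sub>m n"
  shows "mat_inverse A \<noteq> None"
proof -
  have "A \<in> Units (ring_mat TYPE('a) n undefined)"
    using assms unfolding Units_def ring_mat_def by auto
  then show ?thesis using mat_inverse(1)[OF A, where b = undefined] by blast
qed

lemma mat_inverse_mat_diag:
  fixes d :: "nat \<Rightarrow> 'a :: field"
  assumes "\<forall>i<n. d i \<noteq> 0"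
  shows "mat_inverse (mat_diag n d) \<noteq> None"
proof -
  have "mat_diag n (\<lambda>i. d i * inverse (d i)) = 1\<^sub>m n" "mat_diag n (\<lambda>i. inverse (d i) * d i) = 1\<^sub>m n"
    using assms by (auto intro!: eq_matI simp: mat_diag_def)
  then show ?thesis
    by (intro mat_inverse_exists[of _ n "mat_diag n (\<lambda>i. inverse (d i))"]) auto
qed

lemma mult_mat_right_cancel:
  fixes A B D :: "'a :: field mat"
  assumes "A \<in> carrier_mat m n" "B \<in> carrier_mat m n" "D \<in> carrier_mat n n"
    and "mat_inverse D \<noteq> None" and "A * D = B * D"
  shows "A = B"
proof -
  obtain Di where "mat_inverse D = Some Di" using assms(4) by blast
  then have Di: "D * Di = 1\<^sub>m n" "Di \<in> carrier_mat n n" using mat_inverse(2)[OF assms(3)] by auto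
  have "A = A * D * Di" using assms(1,3) Di by (simp add: assoc_mult_mat[of A m n D n Di n])
  also have "\<dots> = B * D * Di" using assms(5) by simp
  also have "\<dots> = B" using assms(2,3) Di by (simp add: assoc_mult_mat[of B m n D n Di n])
  finally show ?thesis .
qed

lemma transpose_mat_diag [simp]: "transpose_mat (mat_diag n d) = mat_diag n d"
  by (auto intro!: eq_matI simp: mat_diag_def)

lemma mat_diag_add_one_four_block:
  "mat_diag (n + 1) d = four_block_mat (mat_diag n d) (0\<^sub>m n 1) (0\<^sub>m 1 n) (mat 1 1 (\<lambda>_. d n))"
  by (auto intro!: eq_matI simp: mat_diag_def less_Suc_eq)

lemma mat_append_col_eq_four_block:
  assumes "A \<in> carrier_mat m k" "v \<in> carrier_vec m"
  shows "mat m (k + 1) (\<lambda>(i, l). if l < k then A $$ (i, l) else v $ i)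
       = four_block_mat A (mat_of_cols m [v]) (0\<^sub>m 0 k) (0\<^sub>m 0 1)"
  using assms by (auto intro!: eq_matI simp: mat_of_cols_index)

lemma isometry_cancel_left:
  fixes V :: "'a :: comm_ring_1 mat"
  assumes "transpose_mat V * M * V = 1\<^sub>m k" "V \<in> carrier_mat n k" "M \<in> carrier_mat n n"
    and "dim_row X = k"
  shows "transpose_mat V * (M * (V * X)) = X"
proof -
  have X: "X \<in> carrier_mat k (dim_col X)" using assms(4) by auto
  have "transpose_mat V * (M * (V * X)) = (transpose_mat V * M * V) * X"
    using assms(2,3) X by (simp add: assoc_mult_mat_dims)
  then show ?thesis using assms(1) X by simp
qed

lemma isometry_mult:
  fixes X Y :: "'a :: comm_ring_1 mat"
  assumes "X \<in> carrier_mat n k" "M \<in> carrier_mat n n" "Y \<in> carrier_mat k l"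
    and "transpose_mat X * M * X = 1\<^sub>m k" "transpose_mat Y * Y = 1\<^sub>m l"
  shows "transpose_mat (X * Y) * M * (X * Y) = 1\<^sub>m l"
  using assms by (simp add: transpose_mult[of X n k Y l] assoc_mult_mat_dims isometry_cancel_left)

lemma core_svdD:
  assumes "core_svd M D A V S W k" and "A \<in> carrier_mat m n"
  shows "M \<in> carrier_mat m m" "D \<in> carrier_mat n n"
    and "V \<in> carrier_mat m k" "W \<in> carrier_mat n k" "S \<in> carrier_mat k k"
    and "\<exists>\<sigma>. S = mat_diag k \<sigma> \<and> (\<forall>i<k. \<sigma> i > 0) \<and>
      (\<forall>i j. i \<le> j \<longrightarrow> j < k \<longrightarrow> \<sigma> j \<le> \<sigma> i)"
    and "transpose_mat V * M * V = 1\<^sub>m k" "transpose_mat W * D * W = 1\<^sub>m k"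
    and "A = V * S * (transpose_mat W * D)"
  using assms unfolding core_svd_def Let_def by auto

lemma core_svd_factorization:
  "core_svd M D A V S W k \<Longrightarrow> A = V * S * (transpose_mat W * D)"
  unfolding core_svd_def Let_def by blast

lemma core_svd_cancel_weight:
  assumes svd: "core_svd M D (U * D) V S W k"
    and U: "U \<in> carrier_mat m n" and D: "D \<in> carrier_mat n n" "mat_inverse D \<noteq> None"
  shows "U = V * S * transpose_mat W"
proof -
  note svd = core_svdD[OF svd mult_carrier_mat[OF U D(1)]]
  show ?thesis
    using svd U by (intro mult_mat_right_cancel[OF U _ D]) (auto simp: assoc_mult_mat_dims)
qed

lemma hadj_of_factorization:
  fixes D M V S W :: "real mat"
  assumes "D \<in> carrier_mat n n" "transpose_mat D = D" "mat_inverse D \<noteq> None"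
    and "M \<in> carrier_mat m m" and "V \<in> carrier_mat m k" "W \<in> carrier_mat n k" "S \<in> carrier_mat k k"
    and "transpose_mat S = S"
  shows "hadj D M (V * S * (transpose_mat W * D)) = W * (S * (transpose_mat V * M))"
proof -
  define X where "X = W * (S * transpose_mat V)"
  have X: "X \<in> carrier_mat n m" using assms unfolding X_def by auto
  obtain Di where Di_inv: "mat_inverse D = Some Di" using assms(3) by blast
  then have Di: "Di * D = 1\<^sub>m n" "Di \<in> carrier_mat n n" using mat_inverse(2)[OF assms(1)] by auto
  have "transpose_mat (V * S * (transpose_mat W * D))
      = transpose_mat (transpose_mat W * D) * transpose_mat (V * S)"
    using assms by (intro transpose_mult[of _ m k _ n]) auto
  also have "\<dots> = D * X"
    using assms by (simp add: X_def transpose_mult[of _ k n _ n] transpose_mult[of V m k S k]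
        assoc_mult_mat_dims)
  finally have "hadj D M (V * S * (transpose_mat W * D)) = Di * (D * X) * M"
    using Di_inv by (simp add: hadj_def)
  also have "Di * (D * X) = X"
    using assms(1) Di X by (simp add: assoc_mult_mat[of Di n n D n X m, symmetric])
  finally show ?thesis using assms unfolding X_def by (simp add: assoc_mult_mat_dims)
qed

lemma core_svdI:
  fixes M D A V S W :: "real mat"
  assumes A: "A \<in> carrier_mat m n" and M: "M \<in> carrier_mat m m"
    and D: "D \<in> carrier_mat n n" "transpose_mat D = D" "mat_inverse D \<noteq> None"
    and V: "V \<in> carrier_mat m k" and W: "W \<in> carrier_mat n k"
    and S: "\<exists>\<sigma>. S = mat_diag k \<sigma> \<and> (\<forall>i<k. \<sigma> i > 0) \<and>
      (\<forall>i j. i \<le> j \<longrightarrow> j < k \<longrightarrow> \<sigma> j \<le> \<sigma> i)"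
    and VMV: "transpose_mat V * M * V = 1\<^sub>m k" and WDW: "transpose_mat W * D * W = 1\<^sub>m k"
    and A_eq: "A = V * S * (transpose_mat W * D)"
  shows "core_svd M D A V S W k"
proof -
  have Sc: "S \<in> carrier_mat k k" and St: "transpose_mat S = S" using S by auto
  have H: "hadj D M A = W * (S * (transpose_mat V * M))"
    unfolding A_eq using hadj_of_factorization[OF D M V W Sc St] .
  note cancel = isometry_cancel_left[OF VMV V M] isometry_cancel_left[OF WDW W D(1)]
  note dims = carrier_matD[OF V] carrier_matD[OF W] carrier_matD[OF M] carrier_matD[OF D(1)]
    carrier_matD[OF Sc]
  have "transpose_mat V * (M * V) = 1\<^sub>m k" "transpose_mat W * (D * W) = 1\<^sub>m k"
    using VMV WDW by (simp_all add: assoc_mult_mat_dims dims)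
  then have "A * W = V * S" "hadj D M A * V = W * S"
    "A * hadj D M A * V = V * (S * S)" "hadj D M A * A * W = W * (S * S)"
    unfolding H by (simp_all add: A_eq assoc_mult_mat_dims dims cancel)
  then show ?thesis
    unfolding core_svd_def Let_def using A M D V W Sc S VMV WDW A_eq by auto
qed

lemma core_svd_mult_isometries:
  fixes M D X Y Q :: "real mat"
  assumes M: "M \<in> carrier_mat m m"
    and D: "D \<in> carrier_mat n n" "transpose_mat D = D" "mat_inverse D \<noteq> None"
    and X: "X \<in> carrier_mat m l" and Y: "Y \<in> carrier_mat n l"
    and XMX: "transpose_mat X * M * X = 1\<^sub>m l" and YDY: "transpose_mat Y * D * Y = 1\<^sub>m l"
    and Q: "Q \<in> carrier_mat l l" and svdQ: "core_svd (1\<^sub>m l) (1\<^sub>m l) Q VQ SQ WQ r"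
  shows "core_svd M D (X * Q * (transpose_mat Y * D)) (X * VQ) SQ (Y * WQ) r"
proof -
  note Q_svd = core_svdD[OF svdQ Q]
  have VQ: "VQ \<in> carrier_mat l r" and WQ: "WQ \<in> carrier_mat l r" and SQ: "SQ \<in> carrier_mat r r"
    using Q_svd by auto
  have "X * Q * (transpose_mat Y * D) = X * VQ * SQ * (transpose_mat (Y * WQ) * D)"
    using Q_svd(9) X Y D VQ WQ SQ
    by (simp add: transpose_mult[OF Y WQ] assoc_mult_mat_dims)
  moreover have "transpose_mat (X * VQ) * M * (X * VQ) = 1\<^sub>m r"
    using isometry_mult[OF X M VQ XMX] Q_svd(7) VQ by simp
  moreover have "transpose_mat (Y * WQ) * D * (Y * WQ) = 1\<^sub>m r"
    using isometry_mult[OF Y D(1) WQ YDY] Q_svd(8) WQ by simp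
  ultimately show ?thesis
    using M D X Y Q VQ WQ Q_svd(6) by (intro core_svdI[where m = m and n = n]) auto
qed

lemma gram_mat_index:
  fixes A B M :: "'a :: comm_ring_1 mat"
  assumes "A \<in> carrier_mat n p" "B \<in> carrier_mat n q" "M \<in> carrier_mat n n" "a < p" "b < q"
  shows "(transpose_mat A * M * B) $$ (a, b) = col A a \<bullet> (M *\<^sub>v col B b)"
  using assms by (simp add: assoc_mult_mat_dims mult_mat_vec_def)

lemma scalar_prod_mult_mat_vec_sym:
  fixes M :: "'a :: comm_ring_1 mat"
  assumes "M \<in> carrier_mat n n" "transpose_mat M = M" "x \<in> carrier_vec n" "y \<in> carrier_vec n"
  shows "x \<bullet> (M *\<^sub>v y) = y \<bullet> (M *\<^sub>v x)"
  using transpose_vec_mult_scalar[OF assms(1,4,3)] assms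
  by (simp add: comm_scalar_prod[of _ n])

lemma projection_residual_orthogonal:
  fixes M V :: "'a :: comm_ring_1 mat"
  assumes M: "M \<in> carrier_mat m m" and V: "V \<in> carrier_mat m k" and c: "c \<in> carrier_vec m"
    and VMV: "transpose_mat V * M * V = 1\<^sub>m k"
  shows "transpose_mat V *\<^sub>v (M *\<^sub>v (c - V *\<^sub>v (transpose_mat V * M *\<^sub>v c))) = 0\<^sub>v k"
proof -
  define x where "x = transpose_mat V * M *\<^sub>v c"
  have x: "x \<in> carrier_vec k" using M V c unfolding x_def by auto
  have VMc: "transpose_mat V *\<^sub>v (M *\<^sub>v c) = x"
    using M V c unfolding x_def by (simp add: assoc_mult_mat_vec[of _ k m _ m])
  have "transpose_mat V *\<^sub>v (M *\<^sub>v (V *\<^sub>v x)) = (transpose_mat V * M) *\<^sub>v (V *\<^sub>v x)"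
    using M V x by (intro assoc_mult_mat_vec[symmetric]) auto
  also have "\<dots> = (transpose_mat V * M * V) *\<^sub>v x"
    using M V x by (intro assoc_mult_mat_vec[symmetric]) auto
  finally have VMVx: "transpose_mat V *\<^sub>v (M *\<^sub>v (V *\<^sub>v x)) = x"
    using VMV x by simp
  show ?thesis
    using M V c x by (simp flip: x_def add: mult_minus_distrib_mat_vec VMc VMVx)
qed

lemma isometry_append_residual:
  fixes M V :: "real mat" and c :: "real vec" and m k :: nat
  defines "h \<equiv> c - V *\<^sub>v (transpose_mat V * M *\<^sub>v c)"
  defines "j \<equiv> (1 / wnorm M h) \<cdot>\<^sub>v h"
  defines "Vj \<equiv> four_block_mat V (mat_of_cols m [j]) (0\<^sub>m 0 k) (0\<^sub>m 0 1)"
  assumes M: "M \<in> carrier_mat m m" "transpose_mat M = M" and V: "V \<in> carrier_mat m k"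
    and c: "c \<in> carrier_vec m" and VMV: "transpose_mat V * M * V = 1\<^sub>m k"
    and p: "wnorm M h > 0"
  shows "transpose_mat Vj * M * Vj = 1\<^sub>m (k + 1)"
proof -
  define p where "p = wnorm M h"
  have h: "h \<in> carrier_vec m" using M V c unfolding h_def by auto
  have j: "j \<in> carrier_vec m" using h unfolding j_def by simp
  have Vj: "Vj \<in> carrier_mat m (k + 1)" using V unfolding Vj_def by auto
  have col_Vj: "col Vj b = (if b < k then col V b else j)" if "b < k + 1" for b
    using that V j unfolding Vj_def by (auto intro!: eq_vecI simp: mat_of_cols_index)
  have hMh: "h \<bullet> (M *\<^sub>v h) = p\<^sup>2"
    using p unfolding p_def wnorm_def by (simp add: real_sqrt_gt_0_iff)
  have VMV_index: "col V a \<bullet> (M *\<^sub>v col V b) = (if a = b then 1 else 0)" if "a < k" "b < k" for a b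
    using that gram_mat_index[OF V V M(1) that] VMV by simp
  have VMj: "col V a \<bullet> (M *\<^sub>v j) = 0" if "a < k" for a
  proof -
    have "col V a \<bullet> (M *\<^sub>v h) = (transpose_mat V *\<^sub>v (M *\<^sub>v h)) $ a"
      using that V by simp
    also have "\<dots> = 0"
      using that projection_residual_orthogonal[OF M(1) V c VMV] unfolding h_def by simp
    finally show ?thesis
      using that V M h unfolding j_def by (simp add: mult_mat_vec scalar_prod_smult_distrib[of _ m])
  qed
  have jMV: "j \<bullet> (M *\<^sub>v col V a) = 0" if "a < k" for a
    using that V j VMj scalar_prod_mult_mat_vec_sym[OF M, of j "col V a"] by simp
  have jMj: "j \<bullet> (M *\<^sub>v j) = 1"
    using M h hMh p unfolding j_def p_def
    by (simp add: mult_mat_vec scalar_prod_smult_distrib[of _ m] power2_eq_square)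
  show ?thesis
  proof (rule eq_matI)
    fix a b assume "a < dim_row (1\<^sub>m (k + 1) :: real mat)" "b < dim_col (1\<^sub>m (k + 1) :: real mat)"
    then have a: "a < k + 1" and b: "b < k + 1" by auto
    have "(transpose_mat Vj * M * Vj) $$ (a, b) = col Vj a \<bullet> (M *\<^sub>v col Vj b)"
      using gram_mat_index[OF Vj Vj M(1) a b] .
    also have "\<dots> = 1\<^sub>m (k + 1) $$ (a, b)"
      using a b VMV_index VMj jMV jMj
      by (auto simp: col_Vj)
    finally show "(transpose_mat Vj * M * Vj) $$ (a, b) = 1\<^sub>m (k + 1) $$ (a, b)" .
  qed (use Vj M in auto)
qed

lemma mult_four_block_diag_mat:
  assumes "A1 \<in> carrier_mat n1 m1" "D1 \<in> carrier_mat n2 m2"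
    and "A2 \<in> carrier_mat m1 l1" "D2 \<in> carrier_mat m2 l2"
  shows "four_block_mat A1 (0\<^sub>m n1 m2) (0\<^sub>m n2 m1) D1 * four_block_mat A2 (0\<^sub>m m1 l2) (0\<^sub>m m2 l1) D2
       = four_block_mat (A1 * A2) (0\<^sub>m n1 l2) (0\<^sub>m n2 l1) (D1 * D2)"
  using assms by (simp add: mult_four_block_mat[of A1 n1 m1 _ m2 _ n2 D1 A2 l1 _ l2])

lemma isometry_append_scaled_unit:
  fixes W :: "real mat" and \<delta> :: "nat \<Rightarrow> real" and s k :: nat
  defines "Wu \<equiv> four_block_mat W (0\<^sub>m s 1) (0\<^sub>m 1 k) (mat 1 1 (\<lambda>_. 1 / sqrt (\<delta> s)))"
  assumes W: "W \<in> carrier_mat s k" and WDW: "transpose_mat W * mat_diag s \<delta> * W = 1\<^sub>m k"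
    and \<delta>: "\<delta> s > 0"
  shows "transpose_mat Wu * mat_diag (s + 1) \<delta> * Wu = 1\<^sub>m (k + 1)"
proof -
  let ?r = "mat 1 1 (\<lambda>_. 1 / sqrt (\<delta> s))"
  have "transpose_mat Wu = four_block_mat (transpose_mat W) (0\<^sub>m k 1) (0\<^sub>m 1 s) ?r"
    using W unfolding Wu_def by (auto intro!: eq_matI)
  also have "\<dots> * mat_diag (s + 1) \<delta>
      = four_block_mat (transpose_mat W * mat_diag s \<delta>) (0\<^sub>m k 1) (0\<^sub>m 1 s)
          (?r * mat 1 1 (\<lambda>_. \<delta> s))"
    unfolding mat_diag_add_one_four_block using W by (intro mult_four_block_diag_mat) auto
  also have "\<dots> * Wu = four_block_mat (transpose_mat W * mat_diag s \<delta> * W) (0\<^sub>m k 1) (0\<^sub>m 1 k)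
      (?r * mat 1 1 (\<lambda>_. \<delta> s) * ?r)"
    unfolding Wu_def using W by (intro mult_four_block_diag_mat) auto
  also have "?r * mat 1 1 (\<lambda>_. \<delta> s) * ?r = 1\<^sub>m 1"
    using \<delta> by (auto intro!: eq_matI simp: scalar_prod_def)
  finally show ?thesis
    using WDW four_block_one_mat[of k 1] by simp
qed

lemma append_col_factorization:
  fixes V S W :: "'a :: field mat"
  assumes V: "V \<in> carrier_mat m k" and S: "S \<in> carrier_mat k k" and W: "W \<in> carrier_mat s k"
    and x: "x \<in> carrier_vec k" and j: "j \<in> carrier_vec m" and r: "r \<noteq> 0"
  shows "four_block_mat (V * S * transpose_mat W) (mat_of_cols m [V *\<^sub>v x + p \<cdot>\<^sub>v j])
           (0\<^sub>m 0 s) (0\<^sub>m 0 1)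
       = four_block_mat V (mat_of_cols m [j]) (0\<^sub>m 0 k) (0\<^sub>m 0 1)
         * four_block_mat S (mat k 1 (\<lambda>(i, _). r * x $ i)) (0\<^sub>m 1 k) (mat 1 1 (\<lambda>_. r * p))
         * transpose_mat (four_block_mat W (0\<^sub>m s 1) (0\<^sub>m 1 k) (mat 1 1 (\<lambda>_. 1 / r)))"
    (is "_ = ?Vj * ?Q * transpose_mat ?Wu")
proof -
  let ?y = "mat k 1 (\<lambda>(i, _). r * x $ i)" and ?q = "mat 1 1 (\<lambda>_. r * p)"
    and ?r = "mat 1 1 (\<lambda>_. 1 / r)"
  have "transpose_mat ?Wu = four_block_mat (transpose_mat W) (0\<^sub>m k 1) (0\<^sub>m 1 s) ?r"
    using W by (auto intro!: eq_matI)
  then have "?Q * transpose_mat ?Wu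
      = four_block_mat (S * transpose_mat W + ?y * 0\<^sub>m 1 s) (S * 0\<^sub>m k 1 + ?y * ?r)
          (0\<^sub>m 1 k * transpose_mat W + ?q * 0\<^sub>m 1 s) (0\<^sub>m 1 k * 0\<^sub>m k 1 + ?q * ?r)"
    using S W by (simp add: mult_four_block_mat[of _ k k _ 1 _ 1 _ _ s _ 1])
  also have "?y * ?r = mat_of_cols k [x]"
    using r x by (auto intro!: eq_matI simp: scalar_prod_def mat_of_cols_index)
  also have "?q * ?r = mat 1 1 (\<lambda>_. p)"
    using r by (auto intro!: eq_matI simp: scalar_prod_def)
  finally have QW: "?Q * transpose_mat ?Wu
      = four_block_mat (S * transpose_mat W) (mat_of_cols k [x]) (0\<^sub>m 1 s) (mat 1 1 (\<lambda>_. p))"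
    using S W mat_of_cols_carrier(1)[of k "[x]"] by simp
  have "?Vj * (?Q * transpose_mat ?Wu)
      = four_block_mat (V * (S * transpose_mat W) + mat_of_cols m [j] * 0\<^sub>m 1 s)
          (V * mat_of_cols k [x] + mat_of_cols m [j] * mat 1 1 (\<lambda>_. p))
          (0\<^sub>m 0 k * (S * transpose_mat W) + 0\<^sub>m 0 1 * 0\<^sub>m 1 s)
          (0\<^sub>m 0 k * mat_of_cols k [x] + 0\<^sub>m 0 1 * mat 1 1 (\<lambda>_. p))"
    unfolding QW using V S W by (intro mult_four_block_mat) auto
  also have "V * mat_of_cols k [x] + mat_of_cols m [j] * mat 1 1 (\<lambda>_. p)
      = mat_of_cols m [V *\<^sub>v x + p \<cdot>\<^sub>v j]"
    using V x j by (auto intro!: eq_matI simp: scalar_prod_def mat_of_cols_index)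
  finally show ?thesis
    using V S W by (simp add: assoc_mult_mat_dims)
qed

theorem theorem4p1:
  fixes m s k kQ :: nat
    and M U V \<Sigma> W VQ \<Sigma>Q WQ :: "real mat"
    and \<delta> :: "nat \<Rightarrow> real"
    and c :: "real vec"
  defines "\<Delta> \<equiv> mat_diag s \<delta>"
    and "\<Delta>new \<equiv> mat_diag (s + 1) \<delta>"
    and "Vsc \<equiv> transpose_mat V * M *\<^sub>v c"
  defines "h \<equiv> c - V *\<^sub>v Vsc"
  defines "p \<equiv> wnorm M h"
  defines "Q \<equiv> four_block_mat \<Sigma> (mat k 1 (\<lambda>(i, _). sqrt (\<delta> s) * Vsc $ i))
                              (0\<^sub>m 1 k) (mat 1 1 (\<lambda>_. sqrt (\<delta> s) * p))"
    and "j \<equiv> (1 / p) \<cdot>\<^sub>v h"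
    and "Uc \<equiv> mat m (s + 1) (\<lambda>(i, l). if l < s then U $$ (i, l) else c $ i)"
  defines "Vj \<equiv> mat m (k + 1) (\<lambda>(i, l). if l < k then V $$ (i, l) else j $ i)"
    and "Wu \<equiv> four_block_mat W (0\<^sub>m s 1) (0\<^sub>m 1 k) (mat 1 1 (\<lambda>_. 1 / sqrt (\<delta> s)))"
  defines "Vnew \<equiv> Vj * VQ"
    and "Wnew \<equiv> Wu * WQ"
  assumes M: "spd_mat m M"
    and \<delta>pos: "\<forall>i < s + 1. \<delta> i > 0"
    and U: "U \<in> carrier_mat m s"
    and c: "c \<in> carrier_vec m"
    and svd: "core_svd M \<Delta> (U * \<Delta>) V \<Sigma> W k"
    and ppos: "p > 0"
    and svdQ: "core_svd (1\<^sub>m (k + 1)) (1\<^sub>m (k + 1)) Q VQ \<Sigma>Q WQ kQ"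
  shows "core_svd M \<Delta>new (Uc * \<Delta>new) Vnew \<Sigma>Q Wnew kQ
         \<and> Uc * \<Delta>new = Vnew * \<Sigma>Q * (transpose_mat Wnew * \<Delta>new)"
proof -
  have M': "M \<in> carrier_mat m m" "transpose_mat M = M" using M unfolding spd_mat_def by auto
  have \<delta>s: "\<delta> s > 0" using \<delta>pos by simp
  have \<delta>_nonzero: "\<forall>i<s. \<delta> i \<noteq> 0" "\<forall>i<s + 1. \<delta> i \<noteq> 0"
    using \<delta>pos by (auto simp: less_Suc_eq)
  have "U * \<Delta> \<in> carrier_mat m s" using U unfolding \<Delta>_def by simp
  note old = core_svdD[OF svd this]
  have V: "V \<in> carrier_mat m k" and W: "W \<in> carrier_mat s k" and \<Sigma>: "\<Sigma> \<in> carrier_mat k k"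
    using old by auto
  have Vsc: "Vsc \<in> carrier_vec k" and h: "h \<in> carrier_vec m" and j: "j \<in> carrier_vec m"
    using M' V c unfolding Vsc_def h_def j_def by auto
  have U_eq: "U = V * \<Sigma> * transpose_mat W"
    using core_svd_cancel_weight[OF svd U] mat_inverse_mat_diag[OF \<delta>_nonzero(1)]
    unfolding \<Delta>_def by simp
  have c_eq: "c = V *\<^sub>v Vsc + p \<cdot>\<^sub>v j"
    using ppos c V Vsc h unfolding j_def h_def by auto
  have Vj_fb: "Vj = four_block_mat V (mat_of_cols m [j]) (0\<^sub>m 0 k) (0\<^sub>m 0 1)"
    unfolding Vj_def by (rule mat_append_col_eq_four_block[OF V j])
  have Uc_eq: "Uc = Vj * Q * transpose_mat Wu"
    unfolding Uc_def Vj_fb Q_def Wu_def mat_append_col_eq_four_block[OF U c]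
    using append_col_factorization[OF V \<Sigma> W Vsc j, of "sqrt (\<delta> s)" p] \<delta>s U_eq c_eq by simp
  have Vj: "Vj \<in> carrier_mat m (k + 1)" and Wu: "Wu \<in> carrier_mat (s + 1) (k + 1)"
    and Q: "Q \<in> carrier_mat (k + 1) (k + 1)"
    using V W \<Sigma> unfolding Vj_fb Wu_def Q_def by auto
  have "Uc * \<Delta>new = Vj * Q * (transpose_mat Wu * \<Delta>new)"
    using Vj Wu Q unfolding Uc_eq \<Delta>new_def
    by (simp add: assoc_mult_mat_dims carrier_matD[OF mat_diag_dim])
  moreover have "transpose_mat Vj * M * Vj = 1\<^sub>m (k + 1)"
    using isometry_append_residual[OF M' V c old(7)] ppos
    unfolding Vj_fb j_def p_def h_def Vsc_def by simp
  moreover have "transpose_mat Wu * \<Delta>new * Wu = 1\<^sub>m (k + 1)"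
    using isometry_append_scaled_unit[OF W old(8)[unfolded \<Delta>_def] \<delta>s]
    unfolding Wu_def \<Delta>new_def .
  ultimately have "core_svd M \<Delta>new (Uc * \<Delta>new) Vnew \<Sigma>Q Wnew kQ"
    unfolding Vnew_def Wnew_def
    using core_svd_mult_isometries[OF M'(1) _ _ mat_inverse_mat_diag[OF \<delta>_nonzero(2)] Vj Wu
        _ _ Q svdQ]
    unfolding \<Delta>new_def by simp
  then show ?thesis using core_svd_factorization by blast
qed

end
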